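(* Consider two assets with uncorrelated returns of equal variance and means $\mu_1,\mu_2$, a weight $w\in[0,1]$ on asset 1, and the mean–variance utility $U(w;\delta)=\mu_2+w\delta-\lambda\big(w^2+(1-w)^2\big)$ with $\lambda>0$ and mean gap $\delta=\mu_1-\mu_2$. Suppose $\delta\sim\mathcal N(0,\tau^2)$ with $\tau^2>0$, and one observes $\hat\delta$ with $\hat\delta\mid\delta\sim\mathcal N(\delta,s^2)$, $s^2>0$. Define the predict-then-optimize rule $w_{\mathrm{pto}}(\hat\delta)=\Pi_{[0,1]}\big(\tfrac12+\tfrac{\hat\delta}{4\lambda}\big)$ and, with $\rho=\tfrac{\tau^2}{\tau^2+s^2}\in(0,1)$, the shrinkage rule $w_{\mathrm{e2e}}(\hat\delta)=\Pi_{[0,1]}\big(\tfrac12+\rho\tfrac{\hat\delta}{4\lambda}\big)$. Then $w_{\mathrm{e2e}}$ is the Bayes-optimal policy: for every measurable policy $w(\hat\delta)\in[0,1]$, $\mathbb E[U(w_{\mathrm{e2e}}(\hat\delta);\delta)]\ge\mathbb E[U(w(\hat\delta);\delta)]$, and the plug-in rule is strictly dominated: $\mathbb E[U(w_{\mathrm{pto}}(\hat\delta);\delta)]<\mathbb E[U(w_{\mathrm{e2e}}(\hat\delta);\delta)]$.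
   Context: $\Pi_{[0,1]}$ denotes clipping (projection) onto the interval $[0,1]$. The variance scale of the returns is absorbed into $\lambda$, and $\mu_2$ is a fixed real number. *)

theory Defs
  imports "HOL-Probability.Probability"
begin

definition clip01 :: "real \<Rightarrow> real" where
  "clip01 x = max 0 (min 1 x)"

definition mv_utility :: "real \<Rightarrow> real \<Rightarrow> real \<Rightarrow> real \<Rightarrow> real" where
  "mv_utility mu2 lam w d = mu2 + w * d - lam * (w\<^sup>2 + (1 - w)\<^sup>2)"

definition w_pto :: "real \<Rightarrow> real \<Rightarrow> real" where
  "w_pto lam dh = clip01 (1/2 + dh / (4 * lam))"

definition w_e2e :: "real \<Rightarrow> real \<Rightarrow> real \<Rightarrow> real \<Rightarrow> real" where
  "w_e2e tau2 s2 lam dh = clip01 (1/2 + (tau2 / (tau2 + s2)) * dh / (4 * lam))"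

end

theory Submission
  imports Defs
begin

(* The utility is affine in delta, so only the posterior mean of delta given the observation
   X = delta + epsilon matters; for independent centred Gaussians it is rho X.  Hence
   E U(w(X); delta) = E U(w(X); rho X).  For fixed X, a |-> U(a; rho X) is a concave quadratic
   whose maximiser over [0,1] is the clipped stationary point w_e2e(X), and every other a in [0,1]
   loses at least 2 lam (a - w_e2e(X))^2.  The plug-in rule differs from w_e2e(X) on the event
   0 < X < 2 lam, which has positive probability. *)

lemma clip01_mem: "clip01 x \<in> {0..1}"
  by (simp add: clip01_def)

lemma clip01_eq_self: "x \<in> {0..1} \<Longrightarrow> clip01 x = x"
  by (simp add: clip01_def)

lemma borel_measurable_clip01 [measurable]: "clip01 \<in> borel_measurable borel"
  unfolding clip01_def by measurable

lemma clip01_variational_ineq: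
  assumes "a \<in> {0..1}"
  shows "0 \<le> (a - clip01 x) * (clip01 x - x)"
  using assms unfolding clip01_def
  by (cases "x < 0"; cases "x > 1") (auto intro: mult_nonneg_nonneg mult_nonpos_nonpos mult_nonneg_nonpos)

lemma mv_utility_clip01_optimal:
  fixes lam d :: real
  assumes lam: "lam > 0" and a: "a \<in> {0..1}"
  defines "c \<equiv> clip01 (1/2 + d / (4 * lam))"
  shows "mv_utility mu2 lam a d + 2 * lam * (a - c)\<^sup>2 \<le> mv_utility mu2 lam c d"
proof -
  have "mv_utility mu2 lam c d - mv_utility mu2 lam a d - 2 * lam * (a - c)\<^sup>2
      = 4 * lam * ((a - c) * (c - (1/2 + d / (4 * lam))))"
    using lam by (simp add: mv_utility_def field_simps power2_eq_square)
  moreover have "0 \<le> (a - c) * (c - (1/2 + d / (4 * lam)))"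
    unfolding c_def using a by (rule clip01_variational_ineq)
  ultimately show ?thesis
    using lam by (smt (verit) mult_pos_pos mult_nonneg_nonneg)
qed

lemma integrable_mult_unit_interval:
  fixes D :: "'a \<Rightarrow> real"
  assumes D: "integrable M D" and a: "a \<in> borel_measurable M" "\<And>\<omega>. a \<omega> \<in> {0..1}"
  shows "integrable M (\<lambda>\<omega>. a \<omega> * D \<omega>)"
  using D by (rule Bochner_Integration.integrable_bound)
    (use a D in \<open>auto simp: abs_mult intro!: mult_left_le_one_le\<close>)

lemma (in finite_measure) integrable_mv_utility:
  assumes D: "integrable M D" and a: "a \<in> borel_measurable M" "\<And>\<omega>. a \<omega> \<in> {0..1}"
  shows "integrable M (\<lambda>\<omega>. mv_utility mu2 lam (a \<omega>) (D \<omega>))"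
proof -
  have "integrable M (\<lambda>\<omega>. (a \<omega>)\<^sup>2 + (1 - a \<omega>)\<^sup>2)"
  proof (rule integrable_const_bound[where B = 1])
    show "AE \<omega> in M. norm ((a \<omega>)\<^sup>2 + (1 - a \<omega>)\<^sup>2) \<le> 1"
    proof (rule AE_I2)
      fix \<omega>
      have "(a \<omega>)\<^sup>2 + (1 - a \<omega>)\<^sup>2 = 1 - 2 * (a \<omega> * (1 - a \<omega>))"
        by (simp add: power2_eq_square algebra_simps)
      moreover have "0 \<le> a \<omega> * (1 - a \<omega>)" "a \<omega> * (1 - a \<omega>) \<le> 1"
        using a(2)[of \<omega>] by (auto intro: mult_le_one)
      ultimately show "norm ((a \<omega>)\<^sup>2 + (1 - a \<omega>)\<^sup>2) \<le> 1"
        by simp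
    qed
  qed (use a in measurable)
  then show ?thesis
    using integrable_mult_unit_interval[OF D a] unfolding mv_utility_def by simp
qed

lemma (in finite_measure) integral_mv_utility_eq:
  assumes D1: "integrable M D1" and D2: "integrable M D2"
    and a: "a \<in> borel_measurable M" "\<And>\<omega>. a \<omega> \<in> {0..1}"
    and eq: "(\<integral>\<omega>. a \<omega> * D1 \<omega> \<partial>M) = (\<integral>\<omega>. a \<omega> * D2 \<omega> \<partial>M)"
  shows "(\<integral>\<omega>. mv_utility mu2 lam (a \<omega>) (D1 \<omega>) \<partial>M) = (\<integral>\<omega>. mv_utility mu2 lam (a \<omega>) (D2 \<omega>) \<partial>M)"
proof -
  have "(\<integral>\<omega>. mv_utility mu2 lam (a \<omega>) (D1 \<omega>) \<partial>M) - (\<integral>\<omega>. mv_utility mu2 lam (a \<omega>) (D2 \<omega>) \<partial>M)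
      = (\<integral>\<omega>. a \<omega> * D1 \<omega> - a \<omega> * D2 \<omega> \<partial>M)"
    using integrable_mv_utility[OF D1 a] integrable_mv_utility[OF D2 a]
    by (simp add: mv_utility_def algebra_simps flip: Bochner_Integration.integral_diff)
  also have "\<dots> = 0"
    using integrable_mult_unit_interval[OF D1 a] integrable_mult_unit_interval[OF D2 a] eq by simp
  finally show ?thesis by simp
qed

lemma (in finite_measure) integral_mv_utility_le_clip01:
  assumes lam: "lam > 0" and D: "integrable M D"
    and a: "a \<in> borel_measurable M" "\<And>\<omega>. a \<omega> \<in> {0..1}"
  shows "(\<integral>\<omega>. mv_utility mu2 lam (a \<omega>) (D \<omega>) \<partial>M)
    \<le> (\<integral>\<omega>. mv_utility mu2 lam (clip01 (1/2 + D \<omega> / (4 * lam))) (D \<omega>) \<partial>M)"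
proof (rule integral_mono)
  have [measurable]: "D \<in> borel_measurable M"
    using D by simp
  show "integrable M (\<lambda>\<omega>. mv_utility mu2 lam (clip01 (1/2 + D \<omega> / (4 * lam))) (D \<omega>))"
    using D by (intro integrable_mv_utility clip01_mem) measurable
  show "mv_utility mu2 lam (a \<omega>) (D \<omega>) \<le> mv_utility mu2 lam (clip01 (1/2 + D \<omega> / (4 * lam))) (D \<omega>)" for \<omega>
    using mv_utility_clip01_optimal[OF lam a(2)] lam by (smt (verit) zero_le_power2 mult_nonneg_nonneg)
qed (rule integrable_mv_utility[OF D a])

lemma (in finite_measure) integral_mv_utility_less_clip01:
  assumes lam: "lam > 0" and D: "integrable M D"
    and a: "a \<in> borel_measurable M" "\<And>\<omega>. a \<omega> \<in> {0..1}"
    and A: "A \<in> sets M" "emeasure M A \<noteq> 0"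
    and ne: "\<And>\<omega>. \<omega> \<in> A \<Longrightarrow> a \<omega> \<noteq> clip01 (1/2 + D \<omega> / (4 * lam))"
  shows "(\<integral>\<omega>. mv_utility mu2 lam (a \<omega>) (D \<omega>) \<partial>M)
    < (\<integral>\<omega>. mv_utility mu2 lam (clip01 (1/2 + D \<omega> / (4 * lam))) (D \<omega>) \<partial>M)"
proof (rule integral_less_AE[OF _ _ A(2,1)])
  have [measurable]: "D \<in> borel_measurable M"
    using D by simp
  show "integrable M (\<lambda>\<omega>. mv_utility mu2 lam (clip01 (1/2 + D \<omega> / (4 * lam))) (D \<omega>))"
    using D by (intro integrable_mv_utility clip01_mem) measurable
  show "integrable M (\<lambda>\<omega>. mv_utility mu2 lam (a \<omega>) (D \<omega>))"
    by (rule integrable_mv_utility[OF D a])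
  note gap = mv_utility_clip01_optimal[OF lam a(2)]
  show "AE \<omega> in M. mv_utility mu2 lam (a \<omega>) (D \<omega>) \<le> mv_utility mu2 lam (clip01 (1/2 + D \<omega> / (4 * lam))) (D \<omega>)"
    using gap lam by (smt (verit) AE_I2 zero_le_power2 mult_nonneg_nonneg)
  show "AE \<omega> in M. \<omega> \<in> A \<longrightarrow>
      mv_utility mu2 lam (a \<omega>) (D \<omega>) \<noteq> mv_utility mu2 lam (clip01 (1/2 + D \<omega> / (4 * lam))) (D \<omega>)"
    using gap ne lam by (smt (verit) AE_I2 zero_less_power2 mult_pos_pos)
qed

(* The joint density of (X, X + Y) splits into the density of X + Y and the conditional
   density of X given X + Y = y, which is normal with mean p y / (p + q). *)
lemma normal_density_mult_shift:
  assumes p: "p > 0" and q: "q > 0"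
  shows "normal_density 0 (sqrt p) x * normal_density 0 (sqrt q) (y - x) =
    normal_density 0 (sqrt (p + q)) y * normal_density (p * y / (p + q)) (sqrt (p * q / (p + q))) x"
proof -
  have sqrt: "sqrt (2 * pi * (q + p)) * sqrt (2 * pi * (q * p) / (q + p)) = sqrt (2 * pi * q) * sqrt (2 * pi * p)"
    using p q by (subst power_eq_iff_eq_base[symmetric, where n = 2])
      (simp_all add: real_sqrt_mult[symmetric] power2_eq_square)
  show ?thesis
    using p q
    apply (simp add: normal_density_def sqrt mult_exp_exp add.commute[of p q] mult.commute[of p q])
    apply (simp add: divide_simps power2_eq_square)
    apply (simp add: algebra_simps)
    done
qed

lemma integral_normal_density_mult_shift_moment:
  assumes p: "p > 0" and q: "q > 0"
  shows "(\<integral>x. normal_density 0 (sqrt p) x * normal_density 0 (sqrt q) (y - x) * x \<partial>lborel) =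
    normal_density 0 (sqrt (p + q)) y * (p * y / (p + q))"
  using p q
  by (simp add: normal_density_mult_shift mult.assoc integral_normal_moment_nz_1)

lemma integrable_lborel_pair_mult_shift:
  fixes f h :: "real \<Rightarrow> real"
  assumes f: "integrable lborel f" and h: "integrable lborel h"
  shows "integrable (lborel \<Otimes>\<^sub>M lborel) (\<lambda>z. f (fst z) * h (snd z - c * fst z))"
proof (rule lborel_pair.Fubini_integrable)
  have [measurable]: "f \<in> borel_measurable borel" "h \<in> borel_measurable borel"
    using f h by auto
  show "(\<lambda>z. f (fst z) * h (snd z - c * fst z)) \<in> borel_measurable (lborel \<Otimes>\<^sub>M lborel)"
    by measurable
  have "(\<integral>y. norm (f x * h (y - c * x)) \<partial>lborel) = \<bar>f x\<bar> * (\<integral>y. \<bar>h y\<bar> \<partial>lborel)" for x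
    using lborel_integral_real_affine[of 1 "\<lambda>y. \<bar>h y\<bar>" "- c * x"] by (simp add: abs_mult)
  then show "integrable lborel (\<lambda>x. \<integral>y. norm (f (fst (x, y)) * h (snd (x, y) - c * fst (x, y))) \<partial>lborel)"
    using f by simp
  show "AE x in lborel. integrable lborel (\<lambda>y. f (fst (x, y)) * h (snd (x, y) - c * fst (x, y)))"
    using h lborel_integrable_real_affine_iff[of 1 h "- c * x" for x] by simp
qed

lemma integral_lborel_pair_normal_sum_mult:
  fixes g :: "real \<Rightarrow> real"
  assumes p: "p > 0" and q: "q > 0"
    and g[measurable]: "g \<in> borel_measurable borel" and g_bound: "\<And>y. \<bar>g y\<bar> \<le> B"
  shows "(\<integral>z. normal_density 0 (sqrt p) (fst z) * normal_density 0 (sqrt q) (snd z) *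
             (g (fst z + snd z) * fst z) \<partial>(lborel \<Otimes>\<^sub>M lborel))
       = (\<integral>y. normal_density 0 (sqrt (p + q)) y * (g y * (p * y / (p + q))) \<partial>lborel)"
proof -
  let ?f = "normal_density 0 (sqrt p)" and ?h = "normal_density 0 (sqrt q)"
  define F where "F = (\<lambda>z. ?f (fst z) * ?h (snd z) * (g (fst z + snd z) * fst z))"
  define G where "G = (\<lambda>x y. ?f x * ?h (y - x) * (g y * x))"
  have bound: "integrable (lborel \<Otimes>\<^sub>M lborel) (\<lambda>z. B * (?f (fst z) * \<bar>fst z\<bar>) * ?h (snd z - c * fst z))" for c
    using p q integrable_normal_moment_abs[of "sqrt p" 0 1]
    by (intro integrable_lborel_pair_mult_shift) auto
  have norm_le: "norm (?f x * ?h y * (g u * x)) \<le> norm (B * (?f x * \<bar>x\<bar>) * ?h y)" for x y u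
  proof -
    have "\<bar>g u\<bar> * (?f x * \<bar>x\<bar> * ?h y) \<le> \<bar>B\<bar> * (?f x * \<bar>x\<bar> * ?h y)"
      using g_bound[of u] by (intro mult_right_mono) auto
    then show ?thesis
      by (simp add: abs_mult ac_simps)
  qed
  have "integrable (lborel \<Otimes>\<^sub>M lborel) F"
    by (rule Bochner_Integration.integrable_bound[OF bound[of 0]])
      (auto simp: F_def intro!: norm_le[unfolded real_norm_def])
  then have "integral\<^sup>L (lborel \<Otimes>\<^sub>M lborel) F = (\<integral>x. \<integral>e. F (x, e) \<partial>lborel \<partial>lborel)"
    by (rule lborel_pair.integral_fst'[symmetric])
  also have "\<dots> = (\<integral>x. \<integral>y. G x y \<partial>lborel \<partial>lborel)"
    using lborel_integral_real_affine[of 1 "G x" x for x]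
    by (simp add: F_def G_def add.commute)
  also have "\<dots> = (\<integral>y. \<integral>x. G x y \<partial>lborel \<partial>lborel)"
  proof (rule lborel_pair.Fubini_integral[symmetric])
    show "integrable (lborel \<Otimes>\<^sub>M lborel) (case_prod G)"
      by (rule Bochner_Integration.integrable_bound[OF bound[of 1]])
        (auto simp: G_def split_beta' intro!: norm_le[unfolded real_norm_def])
  qed
  also have "\<dots> = (\<integral>y. normal_density 0 (sqrt (p + q)) y * (g y * (p * y / (p + q))) \<partial>lborel)"
  proof -
    have "G x y = g y * (?f x * ?h (y - x) * x)" for x y
      by (simp add: G_def)
    then show ?thesis
      using p q by (simp add: integral_normal_density_mult_shift_moment mult.left_commute)
  qed
  finally show ?thesis
    unfolding F_def .
qed

lemma (in prob_space) integrable_normal_distributed: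
  assumes "0 < \<sigma>" and "distributed M lborel X (normal_density \<mu> \<sigma>)"
  shows "integrable M X"
  using distributed_integrable[OF assms(2), of "\<lambda>x. x"] integrable_normal_moment_nz_1[OF assms(1)]
  by simp

lemma (in prob_space) emeasure_normal_distributed_interval_pos:
  assumes "0 < \<sigma>" and X: "distributed M lborel X (normal_density \<mu> \<sigma>)" and "a < b"
  shows "emeasure M {\<omega> \<in> space M. X \<omega> \<in> {a<..<b}} \<noteq> 0"
proof
  assume "emeasure M {\<omega> \<in> space M. X \<omega> \<in> {a<..<b}} = 0"
  then have "(\<integral>\<^sup>+x. ennreal (normal_density \<mu> \<sigma> x) * indicator {a<..<b} x \<partial>lborel) = 0"
    using distributed_emeasure[OF X, of "{a<..<b}"] by (simp add: vimage_def Int_def conj_commute)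
  then have "AE x in lborel. ennreal (normal_density \<mu> \<sigma> x) * indicator {a<..<b} x = 0"
    by (subst (asm) nn_integral_0_iff_AE) auto
  moreover have "ennreal (normal_density \<mu> \<sigma> x) * indicator {a<..<b} x \<noteq> 0" if "x \<in> {a<..<b}" for x
    using that normal_density_pos[OF \<open>0 < \<sigma>\<close>, of \<mu> x] by simp
  ultimately have "AE x in lborel. x \<notin> {a<..<b}"
    by (auto elim: eventually_mono)
  then have "emeasure lborel {a<..<b} = 0"
    by (subst (asm) AE_iff_measurable[of "{a<..<b}"]) auto
  with \<open>a < b\<close> show False
    by simp
qed

lemma (in prob_space) distributed_pair_indep_lborel:
  assumes X: "distributed M lborel X (\<lambda>x. ennreal (f x))"
    and Y: "distributed M lborel Y (\<lambda>y. ennreal (h y))"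
    and indep: "indep_var borel X borel Y" and "\<And>x. 0 \<le> f x" "\<And>y. 0 \<le> h y"
  shows "distributed M (lborel \<Otimes>\<^sub>M lborel) (\<lambda>\<omega>. (X \<omega>, Y \<omega>)) (\<lambda>z. ennreal (f (fst z) * h (snd z)))"
proof -
  have "indep_var lborel X lborel Y"
    using indep unfolding indep_var_def indep_vars_def by (simp add: case_bool_if)
  then have "distributed M (lborel \<Otimes>\<^sub>M lborel) (\<lambda>\<omega>. (X \<omega>, Y \<omega>)) (\<lambda>(x, y). ennreal (f x) * ennreal (h y))"
    using X Y by (intro distributed_joint_indep) (auto intro: lborel.sigma_finite_measure_axioms)
  then show ?thesis
    using assms(4,5) by (simp add: ennreal_mult split_beta')
qed

(* E[X | X + Y] = p / (p + q) (X + Y), tested against bounded functions of X + Y. *)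
lemma (in prob_space) expectation_indep_normal_sum_mult:
  fixes X Y :: "'a \<Rightarrow> real" and g :: "real \<Rightarrow> real"
  assumes p: "p > 0" and q: "q > 0"
    and X: "distributed M lborel X (normal_density 0 (sqrt p))"
    and Y: "distributed M lborel Y (normal_density 0 (sqrt q))"
    and indep: "indep_var borel X borel Y"
    and g[measurable]: "g \<in> borel_measurable borel" and g_bound: "\<And>y. \<bar>g y\<bar> \<le> B"
  shows "expectation (\<lambda>\<omega>. g (X \<omega> + Y \<omega>) * X \<omega>)
    = expectation (\<lambda>\<omega>. g (X \<omega> + Y \<omega>) * (p / (p + q) * (X \<omega> + Y \<omega>)))"
proof -
  have XY: "distributed M lborel (\<lambda>\<omega>. X \<omega> + Y \<omega>) (normal_density 0 (sqrt (p + q)))"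
    using add_indep_normal[OF indep _ _ X Y] p q by simp
  have "expectation (\<lambda>\<omega>. g (X \<omega> + Y \<omega>) * X \<omega>)
      = (\<integral>z. normal_density 0 (sqrt p) (fst z) * normal_density 0 (sqrt q) (snd z) *
             (g (fst z + snd z) * fst z) \<partial>(lborel \<Otimes>\<^sub>M lborel))"
    by (subst distributed_integral[OF distributed_pair_indep_lborel[OF X Y indep]]) auto
  also have "\<dots> = (\<integral>y. normal_density 0 (sqrt (p + q)) y * (g y * (p * y / (p + q))) \<partial>lborel)"
    using p q g g_bound by (rule integral_lborel_pair_normal_sum_mult)
  also have "\<dots> = expectation (\<lambda>\<omega>. g (X \<omega> + Y \<omega>) * (p / (p + q) * (X \<omega> + Y \<omega>)))"
    by (subst distributed_integral[OF XY]) auto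
  finally show ?thesis .
qed

lemma (in prob_space) expectation_mv_utility_posterior_mean:
  fixes X Y :: "'a \<Rightarrow> real" and w :: "real \<Rightarrow> real"
  assumes p: "p > 0" and q: "q > 0"
    and X: "distributed M lborel X (normal_density 0 (sqrt p))"
    and Y: "distributed M lborel Y (normal_density 0 (sqrt q))"
    and indep: "indep_var borel X borel Y"
    and w[measurable]: "w \<in> borel_measurable borel" and w_mem: "\<And>y. w y \<in> {0..1}"
  shows "expectation (\<lambda>\<omega>. mv_utility mu2 lam (w (X \<omega> + Y \<omega>)) (X \<omega>))
    = expectation (\<lambda>\<omega>. mv_utility mu2 lam (w (X \<omega> + Y \<omega>)) (p / (p + q) * (X \<omega> + Y \<omega>)))"
proof (rule integral_mv_utility_eq)
  have [measurable]: "X \<in> borel_measurable M" "Y \<in> borel_measurable M"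
    using X Y by (auto dest: distributed_measurable)
  show X_int: "integrable M X"
    using p X by (intro integrable_normal_distributed) auto
  have "integrable M Y"
    using q Y by (intro integrable_normal_distributed) auto
  with X_int show "integrable M (\<lambda>\<omega>. p / (p + q) * (X \<omega> + Y \<omega>))"
    by (intro integrable_mult_right Bochner_Integration.integrable_add)
  show "(\<lambda>\<omega>. w (X \<omega> + Y \<omega>)) \<in> borel_measurable M"
    by measurable
  show "\<And>\<omega>. w (X \<omega> + Y \<omega>) \<in> {0..1}"
    by (rule w_mem)
  show "expectation (\<lambda>\<omega>. w (X \<omega> + Y \<omega>) * X \<omega>)
    = expectation (\<lambda>\<omega>. w (X \<omega> + Y \<omega>) * (p / (p + q) * (X \<omega> + Y \<omega>)))"
    using p q X Y indep w by (rule expectation_indep_normal_sum_mult[where B = 1])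
      (use w_mem in \<open>auto simp: abs_le_iff\<close>)
qed

lemma w_e2e_less_w_pto:
  assumes "lam > 0" "tau2 > 0" "s2 > 0" "y \<in> {0<..<2 * lam}"
  shows "w_e2e tau2 s2 lam y < w_pto lam y"
proof -
  let ?d = "tau2 / (tau2 + s2) * y / (4 * lam)"
  have "0 < ?d"
    using assms by simp
  moreover have "tau2 / (tau2 + s2) * y < y" "y / (4 * lam) < 1/2"
    using assms by (auto simp: field_simps)
  then have "?d < y / (4 * lam)"
    using assms by (intro divide_strict_right_mono) auto
  ultimately have "w_e2e tau2 s2 lam y = 1/2 + ?d" "w_pto lam y = 1/2 + y / (4 * lam)"
    using \<open>y / (4 * lam) < 1/2\<close> unfolding w_e2e_def w_pto_def by (intro clip01_eq_self; simp)+
  with \<open>?d < y / (4 * lam)\<close> show ?thesis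
    by simp
qed

lemma borel_measurable_w_pto [measurable]: "w_pto lam \<in> borel_measurable borel"
  unfolding w_pto_def by measurable

lemma borel_measurable_w_e2e [measurable]: "w_e2e tau2 s2 lam \<in> borel_measurable borel"
  unfolding w_e2e_def by measurable

theorem proposition5:
  fixes M :: "'a measure" and \<delta> \<epsilon> :: "'a \<Rightarrow> real"
    and mu2 lam tau2 s2 :: real
  assumes "prob_space M"
    and "lam > 0" and "tau2 > 0" and "s2 > 0"
    and "distributed M lborel \<delta> (normal_density 0 (sqrt tau2))"
    and "distributed M lborel \<epsilon> (normal_density 0 (sqrt s2))"
    and "prob_space.indep_var M borel \<delta> borel \<epsilon>"
  shows "(\<forall>w :: real \<Rightarrow> real. w \<in> borel_measurable borel \<longrightarrow> (\<forall>x. w x \<in> {0..1}) \<longrightarrow>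
           prob_space.expectation M (\<lambda>\<omega>. mv_utility mu2 lam (w (\<delta> \<omega> + \<epsilon> \<omega>)) (\<delta> \<omega>))
           \<le> prob_space.expectation M
                (\<lambda>\<omega>. mv_utility mu2 lam (w_e2e tau2 s2 lam (\<delta> \<omega> + \<epsilon> \<omega>)) (\<delta> \<omega>)))
       \<and> prob_space.expectation M (\<lambda>\<omega>. mv_utility mu2 lam (w_pto lam (\<delta> \<omega> + \<epsilon> \<omega>)) (\<delta> \<omega>))
         < prob_space.expectation M
             (\<lambda>\<omega>. mv_utility mu2 lam (w_e2e tau2 s2 lam (\<delta> \<omega> + \<epsilon> \<omega>)) (\<delta> \<omega>))"
proof -
  interpret prob_space M by fact
  note lam = \<open>lam > 0\<close> and normal = assms(3-7)
  let ?X = "\<lambda>\<omega>. \<delta> \<omega> + \<epsilon> \<omega>" and ?\<rho> = "tau2 / (tau2 + s2)"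
  let ?EU = "\<lambda>w. expectation (\<lambda>\<omega>. mv_utility mu2 lam (w (?X \<omega>)) (?\<rho> * ?X \<omega>))"
  have X: "distributed M lborel ?X (normal_density 0 (sqrt (tau2 + s2)))"
    using add_indep_normal[OF assms(7) _ _ assms(5,6)] assms(3,4) by simp
  then have [measurable]: "?X \<in> borel_measurable M"
    by (auto dest: distributed_measurable)
  have posterior: "integrable M (\<lambda>\<omega>. ?\<rho> * ?X \<omega>)"
    using X assms(3,4) by (intro integrable_mult_right integrable_normal_distributed) auto
  have e2e_mem: "w_e2e tau2 s2 lam y \<in> {0..1}" and pto_mem: "w_pto lam y \<in> {0..1}" for y
    unfolding w_e2e_def w_pto_def by (rule clip01_mem)+
  have optimal: "?EU w \<le> ?EU (w_e2e tau2 s2 lam)"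
    if "w \<in> borel_measurable borel" "\<And>y. w y \<in> {0..1}" for w
    unfolding w_e2e_def using that by (intro integral_mv_utility_le_clip01[OF lam posterior]) auto
  have "?EU (w_pto lam) < ?EU (w_e2e tau2 s2 lam)"
    unfolding w_e2e_def
  proof (rule integral_mv_utility_less_clip01[OF lam posterior])
    show "emeasure M {\<omega> \<in> space M. ?X \<omega> \<in> {0<..<2 * lam}} \<noteq> 0"
      using X assms(3,4) lam by (intro emeasure_normal_distributed_interval_pos) auto
    show "w_pto lam (?X \<omega>) \<noteq> clip01 (1/2 + ?\<rho> * ?X \<omega> / (4 * lam))"
      if "\<omega> \<in> {\<omega> \<in> space M. ?X \<omega> \<in> {0<..<2 * lam}}" for \<omega>
      using w_e2e_less_w_pto[OF assms(2-4), of "?X \<omega>"] that by (simp add: w_e2e_def)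
  qed (use pto_mem in auto)
  with optimal show ?thesis
    using e2e_mem pto_mem by (simp add: expectation_mv_utility_posterior_mean[OF normal])
qed

end
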